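(* Let $G$ be an $n$-vertex connected graph with chromatic number $\chi \geq 2$, and suppose that $\chi$ divides $n$. Then ${\rm ABC}(G) \leq {\rm ABC}(T_{n,\chi})$, with equality if and only if $G \cong T_{n,\chi}$.
   Context: All graphs are simple and undirected. For a graph $G$ and a vertex $v$, $d(v)$ denotes the degree of $v$. The atom-bond connectivity (ABC) index is ${\rm ABC}(G)=\sum_{uv\in E(G)} \sqrt{\frac{d(u)+d(v)-2}{d(u)d(v)}}$. $T_{n,l}$ denotes the complete $l$-partite graph on $n$ vertices whose part sizes $t_1,\dots,t_l$ satisfy $|t_i - t_j| \leq 1$ for all $i,j$. *)

theory Defs
  imports Complex_Main
begin

definition simple_graph :: "'a set \<Rightarrow> ('a \<Rightarrow> 'a \<Rightarrow> bool) \<Rightarrow> bool" where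
  "simple_graph V E \<longleftrightarrow> finite V \<and> (\<forall>u v. E u v \<longrightarrow> E v u) \<and> (\<forall>v. \<not> E v v)
     \<and> (\<forall>u v. E u v \<longrightarrow> u \<in> V \<and> v \<in> V)"

definition edges :: "'a set \<Rightarrow> ('a \<Rightarrow> 'a \<Rightarrow> bool) \<Rightarrow> 'a set set" where
  "edges V E = {{u, v} | u v. u \<in> V \<and> v \<in> V \<and> E u v}"

definition deg :: "'a set \<Rightarrow> ('a \<Rightarrow> 'a \<Rightarrow> bool) \<Rightarrow> 'a \<Rightarrow> nat" where
  "deg V E v = card {u \<in> V. E v u}"

definition ABC :: "'a set \<Rightarrow> ('a \<Rightarrow> 'a \<Rightarrow> bool) \<Rightarrow> real" where
  "ABC V E = (\<Sum>e\<in>edges V E.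
      sqrt ((real (\<Sum>v\<in>e. deg V E v) - 2) / real (\<Prod>v\<in>e. deg V E v)))"

definition connected_graph :: "'a set \<Rightarrow> ('a \<Rightarrow> 'a \<Rightarrow> bool) \<Rightarrow> bool" where
  "connected_graph V E \<longleftrightarrow> V \<noteq> {} \<and>
     (\<forall>u\<in>V. \<forall>v\<in>V. (\<lambda>x y. x \<in> V \<and> y \<in> V \<and> E x y)\<^sup>*\<^sup>* u v)"

definition colorable :: "'a set \<Rightarrow> ('a \<Rightarrow> 'a \<Rightarrow> bool) \<Rightarrow> nat \<Rightarrow> bool" where
  "colorable V E k \<longleftrightarrow> (\<exists>c :: 'a \<Rightarrow> nat. (\<forall>v\<in>V. c v < k) \<and>
     (\<forall>u\<in>V. \<forall>v\<in>V. E u v \<longrightarrow> c u \<noteq> c v))"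

definition chromatic_number :: "'a set \<Rightarrow> ('a \<Rightarrow> 'a \<Rightarrow> bool) \<Rightarrow> nat" where
  "chromatic_number V E = (LEAST k. colorable V E k)"

definition graph_iso :: "'a set \<Rightarrow> ('a \<Rightarrow> 'a \<Rightarrow> bool) \<Rightarrow> 'b set \<Rightarrow> ('b \<Rightarrow> 'b \<Rightarrow> bool) \<Rightarrow> bool" where
  "graph_iso V E V' E' \<longleftrightarrow> (\<exists>f. bij_betw f V V' \<and>
     (\<forall>u\<in>V. \<forall>v\<in>V. E u v \<longleftrightarrow> E' (f u) (f v)))"

text \<open>Turan graph T_{n,l}: vertices {0..<n}, parts are residue classes mod l
(sizes differ by at most 1), edges between vertices in different parts.\<close>
definition turan_V :: "nat \<Rightarrow> nat set" where
  "turan_V n = {0..<n}"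

definition turan_E :: "nat \<Rightarrow> nat \<Rightarrow> nat \<Rightarrow> nat \<Rightarrow> bool" where
  "turan_E n l i j \<longleftrightarrow> i < n \<and> j < n \<and> i mod l \<noteq> j mod l"

end

theory Submission
  imports Defs "HOL-Analysis.Convex"
begin

text \<open>
  Work with the arcs (ordered edges) of \<open>G\<close>, so that \<open>2 ABC(G)\<close> is a sum over arcs. With
  \<open>P\<close> the number of arcs and \<open>R = \<Sum> 1/(d(x) d(y))\<close> over arcs, Cauchy-Schwarz gives
  \<open>(2 ABC(G))\<^sup>2 \<le> P (2n - 2R)\<close>. For a proper \<open>\<chi>\<close>-colouring with \<open>n = \<chi> m\<close>, a second
  Cauchy-Schwarz argument (weighting vertices by their degrees and comparing with the complete
  multipartite graph of the colouring) gives \<open>(\<chi> - 1) R \<ge> \<chi>\<close>, while \<open>G\<close> has at most the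
  \<open>n\<^sup>2 - \<Sum> |class|\<^sup>2 \<le> n (n - m)\<close> arcs of that multipartite graph. Together,
  \<open>(2 ABC(G))\<^sup>2 \<le> 2 n\<^sup>2 (n - m - 1)\<close>, which is attained by \<open>T\<^sub>n\<^sub>,\<^sub>\<chi>\<close>. Equality
  forces \<open>P = n (n - m)\<close>, i.e. \<open>G\<close> is the complete multipartite graph on balanced colour classes.
\<close>

definition arcs :: "'a set \<Rightarrow> ('a \<Rightarrow> 'a \<Rightarrow> bool) \<Rightarrow> ('a \<times> 'a) set" where
  "arcs V E = (SIGMA x:V. {y \<in> V. E x y})"

lemma finite_arcs: "finite V \<Longrightarrow> finite (arcs V E)"
  unfolding arcs_def by auto

lemma sum_arcs_fst:
  assumes "finite V"
  shows "(\<Sum>(x, y)\<in>arcs V E. g x) = (\<Sum>x\<in>V. real (deg V E x) * g x)"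
proof -
  have "(\<Sum>(x, y)\<in>arcs V E. g x) = (\<Sum>x\<in>V. \<Sum>y\<in>{y \<in> V. E x y}. g x)"
    unfolding arcs_def using assms by (subst sum.Sigma) auto
  then show ?thesis unfolding deg_def by simp
qed

lemma card_arcs:
  assumes "finite V"
  shows "real (card (arcs V E)) = (\<Sum>x\<in>V. real (deg V E x))"
  using sum_arcs_fst[OF assms, where E = E and g = "\<lambda>_. 1"] by (simp add: case_prod_unfold)

lemma card_le_card_arcs:
  assumes "finite V" and "\<forall>x\<in>V. 1 \<le> deg V E x"
  shows "card V \<le> card (arcs V E)"
proof -
  have "(\<Sum>x\<in>V. 1) \<le> (\<Sum>x\<in>V. real (deg V E x))"
    using assms(2) by (intro sum_mono) auto
  then show ?thesis unfolding card_arcs[OF assms(1), symmetric] by simp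
qed

lemma sum_arcs_swap:
  assumes "\<And>x y. E x y \<Longrightarrow> E y x"
  shows "(\<Sum>(x, y)\<in>arcs V E. f x y) = (\<Sum>(x, y)\<in>arcs V E. f y x)"
proof -
  have "bij_betw prod.swap (arcs V E) (arcs V E)"
    by (rule bij_betwI[where g = prod.swap]) (auto simp: arcs_def assms)
  from sum.reindex_bij_betw[OF this, of "\<lambda>(x, y). f x y"] show ?thesis
    by (simp add: case_prod_unfold)
qed

lemma arcs_eq_imp_eq:
  assumes "\<And>x y. E x y \<Longrightarrow> x \<in> V \<and> y \<in> V" and "\<And>x y. E' x y \<Longrightarrow> x \<in> V \<and> y \<in> V"
    and "arcs V E = arcs V E'"
  shows "E = E'"
proof (intro ext)
  fix x y
  have "E x y \<longleftrightarrow> (x, y) \<in> arcs V E" and "E' x y \<longleftrightarrow> (x, y) \<in> arcs V E'"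
    using assms(1,2) unfolding arcs_def by auto
  then show "E x y = E' x y" using assms(3) by simp
qed

definition abc_weight :: "real \<Rightarrow> real \<Rightarrow> real" where
  "abc_weight a b = sqrt ((a + b - 2) / (a * b))"

definition abc_sum :: "'a set \<Rightarrow> ('a \<Rightarrow> 'a \<Rightarrow> bool) \<Rightarrow> real" where
  "abc_sum V E = (\<Sum>(x, y)\<in>arcs V E. abc_weight (deg V E x) (deg V E y))"

lemma ABC_eq_half_abc_sum:
  assumes "simple_graph V E"
  shows "ABC V E = abc_sum V E / 2"
proof -
  have fin: "finite V" and sym: "\<And>u v. E u v \<Longrightarrow> E v u" and irr: "\<And>v. \<not> E v v"
    using assms unfolding simple_graph_def by auto
  define w where "w p = abc_weight (deg V E (fst p)) (deg V E (snd p))" for p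
  define ends :: "'a \<times> 'a \<Rightarrow> 'a set" where "ends p = {fst p, snd p}" for p
  have "abc_sum V E = (\<Sum>e\<in>ends ` arcs V E. sum w {p \<in> arcs V E. ends p = e})"
    unfolding abc_sum_def w_def case_prod_unfold by (rule sum.image_gen[OF finite_arcs[OF fin]])
  also have "ends ` arcs V E = edges V E"
    unfolding ends_def arcs_def edges_def by (auto simp: image_def)
  finally have sum_edges: "abc_sum V E = (\<Sum>e\<in>edges V E. sum w {p \<in> arcs V E. ends p = e})" .
  have per_edge: "sqrt ((real (\<Sum>v\<in>e. deg V E v) - 2) / real (\<Prod>v\<in>e. deg V E v))
      = sum w {p \<in> arcs V E. ends p = e} / 2" if edge: "e \<in> edges V E" for e
  proof -
    obtain u v where e: "e = {u, v}" and uv: "u \<in> V" "v \<in> V" "E u v"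
      using edge unfolding edges_def by auto
    have "u \<noteq> v" using uv irr by auto
    moreover have "{p \<in> arcs V E. ends p = e} = {(u, v), (v, u)}"
      using uv sym unfolding arcs_def ends_def e by (auto simp: doubleton_eq_iff)
    ultimately show ?thesis
      unfolding e w_def abc_weight_def by (simp add: add.commute mult.commute)
  qed
  have "ABC V E = (\<Sum>e\<in>edges V E. sum w {p \<in> arcs V E. ends p = e} / 2)"
    unfolding ABC_def by (intro sum.cong refl per_edge)
  then show ?thesis
    unfolding sum_edges sum_divide_distrib .
qed

lemma abc_weight_sq:
  assumes "1 \<le> a" and "1 \<le> b"
  shows "(abc_weight a b)\<^sup>2 = 1 / a + 1 / b - 2 / (a * b)"
proof -
  have "0 \<le> (a + b - 2) / (a * b)" using assms by simp
  then show ?thesis using assms unfolding abc_weight_def by (simp add: field_simps)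
qed

definition randic_sum :: "'a set \<Rightarrow> ('a \<Rightarrow> 'a \<Rightarrow> bool) \<Rightarrow> real" where
  "randic_sum V E = (\<Sum>(x, y)\<in>arcs V E. 1 / (real (deg V E x) * real (deg V E y)))"

lemma sum_abc_weight_sq:
  assumes sg: "simple_graph V E" and deg: "\<forall>x\<in>V. 1 \<le> deg V E x"
  shows "(\<Sum>(x, y)\<in>arcs V E. (abc_weight (deg V E x) (deg V E y))\<^sup>2)
    = 2 * real (card V) - 2 * randic_sum V E"
proof -
  have fin: "finite V" and sym: "\<And>x y. E x y \<Longrightarrow> E y x"
    using sg unfolding simple_graph_def by auto
  have "(\<Sum>(x, y)\<in>arcs V E. 1 / real (deg V E x)) = (\<Sum>x\<in>V. real (deg V E x) * (1 / real (deg V E x)))"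
    by (rule sum_arcs_fst[OF fin])
  also have "\<dots> = (\<Sum>x\<in>V. 1)"
    using deg by (intro sum.cong refl) auto
  also have "\<dots> = real (card V)" by simp
  finally have fst: "(\<Sum>(x, y)\<in>arcs V E. 1 / real (deg V E x)) = real (card V)" .
  moreover have "(\<Sum>(x, y)\<in>arcs V E. 1 / real (deg V E y)) = real (card V)"
    using sum_arcs_swap[OF sym, where f = "\<lambda>x y. 1 / real (deg V E y)"] fst by simp
  moreover have "(\<Sum>(x, y)\<in>arcs V E. (abc_weight (deg V E x) (deg V E y))\<^sup>2)
      = (\<Sum>(x, y)\<in>arcs V E. 1 / real (deg V E x) + 1 / real (deg V E y)
           - 2 * (1 / (real (deg V E x) * real (deg V E y))))"
    using deg by (intro sum.cong refl) (auto simp: arcs_def abc_weight_sq)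
  ultimately show ?thesis
    unfolding randic_sum_def
    by (simp add: case_prod_unfold sum.distrib sum_subtractf sum_distrib_left)
qed

lemma abc_sum_sq_le:
  assumes "simple_graph V E" and "\<forall>x\<in>V. 1 \<le> deg V E x"
  shows "(abc_sum V E)\<^sup>2 \<le> real (card (arcs V E)) * (2 * real (card V) - 2 * randic_sum V E)"
  using Cauchy_Schwarz_ineq_sum[of "\<lambda>_. 1" "\<lambda>(x, y). abc_weight (deg V E x) (deg V E y)" "arcs V E"]
    sum_abc_weight_sq[OF assms]
  unfolding abc_sum_def by (simp add: case_prod_unfold)

lemma card_arcs_sq_le:
  assumes "\<forall>x\<in>V. 1 \<le> deg V E x"
  shows "(real (card (arcs V E)))\<^sup>2
    \<le> (\<Sum>(x, y)\<in>arcs V E. real (deg V E x) * real (deg V E y)) * randic_sum V E"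
proof -
  define D where "D p = real (deg V E (fst p)) * real (deg V E (snd p))" for p
  have pos: "0 < D p" if "p \<in> arcs V E" for p
    using that assms unfolding D_def arcs_def by (force intro: mult_pos_pos)
  have "(\<Sum>p\<in>arcs V E. sqrt (D p) * (1 / sqrt (D p)))\<^sup>2
      \<le> (\<Sum>p\<in>arcs V E. (sqrt (D p))\<^sup>2) * (\<Sum>p\<in>arcs V E. (1 / sqrt (D p))\<^sup>2)"
    by (rule Cauchy_Schwarz_ineq_sum)
  moreover have "(\<Sum>p\<in>arcs V E. sqrt (D p) * (1 / sqrt (D p))) = (\<Sum>p\<in>arcs V E. 1)"
    by (intro sum.cong refl) (use pos in force)
  moreover have "(\<Sum>p\<in>arcs V E. (sqrt (D p))\<^sup>2) = (\<Sum>p\<in>arcs V E. D p)"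
    using pos by (intro sum.cong refl) (simp add: less_imp_le)
  moreover have "(\<Sum>p\<in>arcs V E. (1 / sqrt (D p))\<^sup>2) = (\<Sum>p\<in>arcs V E. 1 / D p)"
    using pos by (intro sum.cong refl) (simp add: power_divide less_imp_le)
  ultimately show ?thesis
    unfolding randic_sum_def D_def case_prod_unfold by simp
qed

definition proper_coloring :: "'a set \<Rightarrow> ('a \<Rightarrow> 'a \<Rightarrow> bool) \<Rightarrow> nat \<Rightarrow> ('a \<Rightarrow> nat) \<Rightarrow> bool" where
  "proper_coloring V E k c \<longleftrightarrow> (\<forall>v\<in>V. c v < k) \<and> (\<forall>u\<in>V. \<forall>v\<in>V. E u v \<longrightarrow> c u \<noteq> c v)"

definition color_class :: "'a set \<Rightarrow> ('a \<Rightarrow> nat) \<Rightarrow> nat \<Rightarrow> 'a set" where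
  "color_class V c i = {x \<in> V. c x = i}"

definition multipartite :: "'a set \<Rightarrow> ('a \<Rightarrow> nat) \<Rightarrow> 'a \<Rightarrow> 'a \<Rightarrow> bool" where
  "multipartite V c x y \<longleftrightarrow> x \<in> V \<and> y \<in> V \<and> c x \<noteq> c y"

lemma simple_graph_multipartite: "finite V \<Longrightarrow> simple_graph V (multipartite V c)"
  unfolding simple_graph_def multipartite_def by auto

lemma arcs_subset_multipartite:
  assumes "simple_graph V E" and "proper_coloring V E k c"
  shows "arcs V E \<subseteq> arcs V (multipartite V c)"
  using assms unfolding simple_graph_def proper_coloring_def arcs_def multipartite_def by auto

lemma sum_color_classes:
  assumes "finite V" and "\<forall>x\<in>V. c x < k"
  shows "(\<Sum>x\<in>V. g x) = (\<Sum>i<k. \<Sum>x\<in>color_class V c i. g x)"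
proof -
  have "c ` V \<subseteq> {..<k}" using assms(2) by auto
  from sum.group[OF assms(1) finite_lessThan this, of g] show ?thesis
    unfolding color_class_def by simp
qed

lemma sum_multipartite_arcs:
  fixes f :: "'a \<Rightarrow> real"
  assumes fin: "finite V" and col: "\<forall>x\<in>V. c x < k"
  shows "(\<Sum>(x, y)\<in>arcs V (multipartite V c). f x * f y)
    = (\<Sum>x\<in>V. f x)\<^sup>2 - (\<Sum>i<k. (\<Sum>x\<in>color_class V c i. f x)\<^sup>2)"
proof -
  define s where "s i = (\<Sum>x\<in>color_class V c i. f x)" for i
  define S where "S = (SIGMA x:V. color_class V c (c x))"
  have split: "V \<times> V = arcs V (multipartite V c) \<union> S" "arcs V (multipartite V c) \<inter> S = {}"
    unfolding S_def arcs_def multipartite_def color_class_def by auto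
  have "(\<Sum>(x, y)\<in>S. f x * f y) = (\<Sum>x\<in>V. f x * s (c x))"
    unfolding S_def s_def using fin
    by (simp add: sum.Sigma[symmetric] sum_distrib_left color_class_def)
  also have "\<dots> = (\<Sum>i<k. \<Sum>x\<in>color_class V c i. f x * s i)"
    by (subst sum_color_classes[OF fin col]) (simp add: color_class_def)
  also have "\<dots> = (\<Sum>i<k. (s i)\<^sup>2)"
    unfolding s_def by (simp add: sum_distrib_right[symmetric] power2_eq_square)
  finally have same: "(\<Sum>(x, y)\<in>S. f x * f y) = (\<Sum>i<k. (s i)\<^sup>2)" .
  have "(\<Sum>x\<in>V. f x)\<^sup>2 = (\<Sum>(x, y)\<in>V \<times> V. f x * f y)"
    by (simp add: power2_eq_square sum_product sum.cartesian_product)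
  also have "\<dots> = (\<Sum>(x, y)\<in>arcs V (multipartite V c). f x * f y) + (\<Sum>(x, y)\<in>S. f x * f y)"
    unfolding split(1) using split(2) fin
    by (intro sum.union_disjoint) (auto simp: S_def color_class_def arcs_def)
  finally show ?thesis unfolding same s_def by simp
qed

lemma sum_multipartite_arcs_le:
  fixes f :: "'a \<Rightarrow> real"
  assumes fin: "finite V" and col: "\<forall>x\<in>V. c x < k"
  shows "real k * (\<Sum>(x, y)\<in>arcs V (multipartite V c). f x * f y) \<le> (real k - 1) * (\<Sum>x\<in>V. f x)\<^sup>2"
proof -
  define s where "s i = (\<Sum>x\<in>color_class V c i. f x)" for i
  have "(\<Sum>x\<in>V. f x) = (\<Sum>i<k. s i)"
    unfolding s_def by (rule sum_color_classes[OF fin col])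
  then have "(\<Sum>x\<in>V. f x)\<^sup>2 \<le> real k * (\<Sum>i<k. (s i)\<^sup>2)"
    using Cauchy_Schwarz_ineq_sum[of "\<lambda>_. 1" s "{..<k}"] by simp
  then show ?thesis
    unfolding sum_multipartite_arcs[OF fin col] s_def[symmetric] by (simp add: algebra_simps)
qed

lemma randic_sum_ge:
  assumes sg: "simple_graph V E" and deg: "\<forall>x\<in>V. 1 \<le> deg V E x" and "V \<noteq> {}"
    and col: "proper_coloring V E k c"
  shows "real k \<le> (real k - 1) * randic_sum V E"
proof -
  have fin: "finite V" using sg unfolding simple_graph_def by simp
  define P where "P = real (card (arcs V E))"
  define prod_sum where "prod_sum E' = (\<Sum>(x, y)\<in>arcs V E'. real (deg V E x) * real (deg V E y))"
    for E'
  have "0 < card V" using fin \<open>V \<noteq> {}\<close> by (simp add: card_gt_0_iff)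
  then have P_pos: "0 < P" unfolding P_def using card_le_card_arcs[OF fin deg] by simp
  have R_nonneg: "0 \<le> randic_sum V E"
    unfolding randic_sum_def by (intro sum_nonneg) auto
  have "prod_sum E \<le> prod_sum (multipartite V c)"
    unfolding prod_sum_def using arcs_subset_multipartite[OF sg col] fin
    by (intro sum_mono2 finite_arcs) auto
  have "real k * P\<^sup>2 \<le> real k * (prod_sum E * randic_sum V E)"
    unfolding P_def prod_sum_def by (intro mult_left_mono card_arcs_sq_le[OF deg]) auto
  also have "\<dots> \<le> (real k * prod_sum (multipartite V c)) * randic_sum V E"
    using \<open>prod_sum E \<le> prod_sum (multipartite V c)\<close> R_nonneg
    by (simp add: mult.assoc mult_left_mono mult_right_mono)
  also have "\<dots> \<le> ((real k - 1) * P\<^sup>2) * randic_sum V E"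
    using sum_multipartite_arcs_le[OF fin, of c k "\<lambda>x. real (deg V E x)"] col R_nonneg
    unfolding prod_sum_def P_def card_arcs[OF fin] proper_coloring_def
    by (intro mult_right_mono) simp_all
  finally have "real k * P\<^sup>2 \<le> ((real k - 1) * randic_sum V E) * P\<^sup>2"
    by (simp add: algebra_simps)
  then show ?thesis using P_pos by simp
qed

lemma card_arcs_multipartite:
  assumes fin: "finite V" and col: "\<forall>x\<in>V. c x < k" and n: "card V = k * m"
  shows "real (card (arcs V (multipartite V c)))
    = real (card V) * (real (card V) - real m) - (\<Sum>i<k. (real (card (color_class V c i)) - real m)\<^sup>2)"
proof -
  define A where "A i = real (card (color_class V c i))" for i
  have "real (card V) = (\<Sum>i<k. A i)"
    unfolding A_def using sum_color_classes[OF fin col, of "\<lambda>_. 1::real"] by simp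
  then have "(\<Sum>i<k. (A i - real m)\<^sup>2) = (\<Sum>i<k. (A i)\<^sup>2) - real (card V) * real m"
    using n by (simp add: power2_diff sum.distrib sum_subtractf sum_distrib_left[symmetric]
        sum_distrib_right[symmetric] algebra_simps power2_eq_square)
  moreover have "real (card (arcs V (multipartite V c))) = (real (card V))\<^sup>2 - (\<Sum>i<k. (A i)\<^sup>2)"
    using sum_multipartite_arcs[OF fin col, of "\<lambda>_. 1"] unfolding A_def by simp
  ultimately show ?thesis unfolding A_def by (simp add: algebra_simps power2_eq_square)
qed

lemma card_arcs_le_balanced:
  assumes sg: "simple_graph V E" and col: "proper_coloring V E k c" and n: "card V = k * m"
  shows "real (card (arcs V E)) \<le> real (card V) * (real (card V) - real m)"
    and "real (card (arcs V E)) = real (card V) * (real (card V) - real m)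
      \<Longrightarrow> E = multipartite V c \<and> (\<forall>i<k. card (color_class V c i) = m)"
proof -
  have fin: "finite V" and inV: "\<And>x y. E x y \<Longrightarrow> x \<in> V \<and> y \<in> V"
    using sg unfolding simple_graph_def by auto
  have colk: "\<forall>x\<in>V. c x < k" using col unfolding proper_coloring_def by simp
  define Q where "Q = (\<Sum>i<k. (real (card (color_class V c i)) - real m)\<^sup>2)"
  have Q_nonneg: "0 \<le> Q" unfolding Q_def by (intro sum_nonneg) auto
  have sub: "arcs V E \<subseteq> arcs V (multipartite V c)" by (rule arcs_subset_multipartite[OF sg col])
  then have le: "card (arcs V E) \<le> card (arcs V (multipartite V c))"
    by (intro card_mono finite_arcs fin)
  then show "real (card (arcs V E)) \<le> real (card V) * (real (card V) - real m)"
    using card_arcs_multipartite[OF fin colk n] Q_nonneg unfolding Q_def by linarith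
  assume eq: "real (card (arcs V E)) = real (card V) * (real (card V) - real m)"
  then have "Q = 0" and "card (arcs V E) = card (arcs V (multipartite V c))"
    using le card_arcs_multipartite[OF fin colk n] Q_nonneg unfolding Q_def by linarith+
  then have "arcs V E = arcs V (multipartite V c)"
    using sub by (intro card_subset_eq finite_arcs fin)
  with inV have "E = multipartite V c"
    by (intro arcs_eq_imp_eq[where V = V]) (auto simp: multipartite_def)
  moreover have "\<forall>i<k. card (color_class V c i) = m"
    using \<open>Q = 0\<close> unfolding Q_def by (subst (asm) sum_nonneg_eq_0_iff) auto
  ultimately show "E = multipartite V c \<and> (\<forall>i<k. card (color_class V c i) = m)" ..
qed

lemma card_mul_randic_sum_le:
  assumes sg: "simple_graph V E" and deg: "\<forall>x\<in>V. 1 \<le> deg V E x" and "V \<noteq> {}"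
    and col: "proper_coloring V E k c" and k: "2 \<le> k" and n: "card V = k * m"
  shows "real (card V) * (real (card V) - real m) * (2 * real (card V) - 2 * randic_sum V E)
    \<le> 2 * (real (card V))\<^sup>2 * (real (card V) - real m - 1)"
proof -
  define N where "N = real (card V)"
  define R where "R = randic_sum V E"
  have N_eq: "N = real k * real m" unfolding N_def n by simp
  have "0 \<le> N" unfolding N_def by simp
  have "real k * real m \<le> (real k - 1) * R * real m"
    using randic_sum_ge[OF sg deg \<open>V \<noteq> {}\<close> col] unfolding R_def by (simp add: mult_right_mono)
  then have N_le: "N \<le> (N - real m) * R"
    unfolding N_eq by (simp add: algebra_simps)
  have "N * (N - real m) * (2 * N - 2 * R) = 2 * N * (N * (N - real m) - (N - real m) * R)"
    by (simp add: algebra_simps)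
  also have "\<dots> \<le> 2 * N * (N * (N - real m) - N)"
    using N_le \<open>0 \<le> N\<close> by (intro mult_left_mono) auto
  also have "\<dots> = 2 * N\<^sup>2 * (N - real m - 1)" by (simp add: algebra_simps power2_eq_square)
  finally show ?thesis unfolding N_def R_def .
qed

lemma abc_sum_le_balanced:
  assumes sg: "simple_graph V E" and deg: "\<forall>x\<in>V. 1 \<le> deg V E x" and "V \<noteq> {}"
    and col: "proper_coloring V E k c" and k: "2 \<le> k" and n: "card V = k * m"
  defines "B \<equiv> 2 * (real (card V))\<^sup>2 * (real (card V) - real m - 1)"
  shows "abc_sum V E \<le> sqrt B"
    and "abc_sum V E = sqrt B \<Longrightarrow> E = multipartite V c \<and> (\<forall>i<k. card (color_class V c i) = m)"
proof -
  have fin: "finite V" using sg unfolding simple_graph_def by simp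
  define N where "N = real (card V)"
  define P where "P = real (card (arcs V E))"
  define X where "X = 2 * N - 2 * randic_sum V E"
  have X_nonneg: "0 \<le> X"
    using sum_abc_weight_sq[OF sg deg] unfolding X_def N_def
    by (metis (no_types, lifting) sum_nonneg zero_le_power2 case_prod_unfold)
  have sq_le: "(abc_sum V E)\<^sup>2 \<le> P * X"
    unfolding P_def X_def N_def by (rule abc_sum_sq_le[OF sg deg])
  have PX_le: "P * X \<le> N * (N - real m) * X"
    using card_arcs_le_balanced(1)[OF sg col n] X_nonneg unfolding P_def N_def
    by (rule mult_right_mono)
  have NX_le: "N * (N - real m) * X \<le> B"
    using card_mul_randic_sum_le[OF sg deg \<open>V \<noteq> {}\<close> col k n] unfolding N_def X_def B_def .
  show "abc_sum V E \<le> sqrt B"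
    using sq_le PX_le NX_le by (intro real_le_rsqrt) linarith
  assume eq: "abc_sum V E = sqrt B"
  have "m \<noteq> 0" using n fin \<open>V \<noteq> {}\<close> by auto
  moreover have "2 * m \<le> k * m" using k by simp
  ultimately have "1 \<le> card V - m" unfolding n by linarith
  then have d_eq: "N - real m = real (card V - m)" unfolding N_def by (simp add: of_nat_diff)
  have "P = N * (N - real m)"
  proof (cases "card V - m = 1")
    case True
    text \<open>Here \<open>B = 0\<close> carries no information, but \<open>G\<close> has no isolated vertices.\<close>
    then show ?thesis
      using card_arcs_le_balanced(1)[OF sg col n] card_le_card_arcs[OF fin deg] d_eq
      unfolding P_def N_def by simp
  next
    case False
    then have "2 \<le> N - real m" using \<open>1 \<le> card V - m\<close> unfolding d_eq by linarith
    moreover have "0 < N" unfolding N_def using fin \<open>V \<noteq> {}\<close> by (simp add: card_gt_0_iff)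
    ultimately have "0 < B" unfolding B_def N_def[symmetric] by simp
    then have abc_sq: "(abc_sum V E)\<^sup>2 = B" unfolding eq by simp
    with \<open>0 < B\<close> have "0 < X" using sq_le X_nonneg by (cases "X = 0") auto
    moreover have "P * X = N * (N - real m) * X" using abc_sq sq_le PX_le NX_le by linarith
    ultimately show ?thesis by simp
  qed
  then show "E = multipartite V c \<and> (\<forall>i<k. card (color_class V c i) = m)"
    using card_arcs_le_balanced(2)[OF sg col n] unfolding P_def N_def by simp
qed

lemma deg_multipartite:
  assumes "finite V" and "x \<in> V"
  shows "deg V (multipartite V c) x = card V - card (color_class V c (c x))"
proof -
  have "{y \<in> V. multipartite V c x y} = V - color_class V c (c x)"
    using assms(2) unfolding multipartite_def color_class_def by auto
  then show ?thesis
    unfolding deg_def using assms(1) by (simp add: card_Diff_subset color_class_def)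
qed

lemma abc_sum_balanced_multipartite:
  assumes fin: "finite V" and col: "\<forall>x\<in>V. c x < k"
    and bal: "\<forall>i<k. card (color_class V c i) = m" and n: "card V = k * m" and k: "2 \<le> k"
  shows "abc_sum V (multipartite V c) = sqrt (2 * (real (card V))\<^sup>2 * (real (card V) - real m - 1))"
proof (cases "m = 0")
  case True
  then show ?thesis using n fin by (simp add: abc_sum_def arcs_def)
next
  case False
  define d where "d = real (card V - m)"
  have deg: "deg V (multipartite V c) x = card V - m" if "x \<in> V" for x
    using deg_multipartite[OF fin that] bal col that by simp
  have "2 * m \<le> k * m" using k by simp
  then have "1 \<le> card V - m" using False unfolding n by linarith
  then have d_ge: "1 \<le> d" unfolding d_def by (metis of_nat_1 of_nat_le_iff)
  have "abc_sum V (multipartite V c) = (\<Sum>(x, y)\<in>arcs V (multipartite V c). abc_weight d d)"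
    unfolding abc_sum_def d_def by (intro sum.cong refl) (auto simp: arcs_def deg)
  also have "\<dots> = real (card V) * d * abc_weight d d"
    using card_arcs[OF fin, of "multipartite V c"] deg by (simp add: d_def)
  also have "\<dots> = sqrt ((real (card V) * d)\<^sup>2 * ((d + d - 2) / (d * d)))"
    unfolding abc_weight_def real_sqrt_mult real_sqrt_abs using d_ge by simp
  also have "\<dots> = sqrt (2 * (real (card V))\<^sup>2 * (d - 1))"
    using d_ge by (simp add: field_simps power2_eq_square)
  also have "d = real (card V) - real m"
    unfolding d_def using \<open>1 \<le> card V - m\<close> by (simp add: of_nat_diff)
  finally show ?thesis .
qed

lemma multipartite_iso:
  assumes fin: "finite V" "finite V'" and col: "\<forall>x\<in>V. c x < k" "\<forall>x\<in>V'. c' x < k"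
    and same: "\<forall>i<k. card (color_class V c i) = card (color_class V' c' i)"
  shows "graph_iso V (multipartite V c) V' (multipartite V' c')"
proof -
  have "\<exists>g. bij_betw g (color_class V c i) (color_class V' c' i)" if "i < k" for i
    using same that fin by (intro finite_same_card_bij) (auto simp: color_class_def)
  then obtain g where g: "\<And>i. i < k \<Longrightarrow> bij_betw (g i) (color_class V c i) (color_class V' c' i)"
    by metis
  define f where "f x = g (c x) x" for x
  have f_class: "f x \<in> V' \<and> c' (f x) = c x" if "x \<in> V" for x
    using g[of "c x"] col that unfolding f_def bij_betw_def color_class_def by auto
  have "bij_betw f V V'"
  proof (rule bij_betw_imageI)
    show "inj_on f V"
    proof (rule inj_onI)
      fix x y assume xy: "x \<in> V" "y \<in> V" "f x = f y"
      then have "c x = c y" using f_class by metis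
      then show "x = y"
        using g[of "c x"] xy col unfolding f_def bij_betw_def inj_on_def color_class_def by auto
    qed
    show "f ` V = V'"
    proof
      show "f ` V \<subseteq> V'" using f_class by auto
      show "V' \<subseteq> f ` V"
      proof
        fix y assume "y \<in> V'"
        then have "y \<in> g (c' y) ` color_class V c (c' y)"
          using g[of "c' y"] col by (auto simp: bij_betw_def color_class_def)
        then obtain x where "x \<in> V" "c x = c' y" "y = g (c' y) x"
          unfolding color_class_def by auto
        then show "y \<in> f ` V" unfolding f_def by (intro image_eqI[of _ _ x]) simp_all
      qed
    qed
  qed
  with f_class show ?thesis
    unfolding graph_iso_def multipartite_def by (intro exI[of _ f]) auto
qed

lemma deg_graph_iso:
  assumes bij: "bij_betw f V V'" and iso: "\<forall>u\<in>V. \<forall>v\<in>V. E u v \<longleftrightarrow> E' (f u) (f v)"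
    and "x \<in> V"
  shows "deg V' E' (f x) = deg V E x"
proof -
  have "{y \<in> V'. E' (f x) y} = f ` {y \<in> V. E x y}"
    using bij iso \<open>x \<in> V\<close> unfolding bij_betw_def by auto
  moreover have "inj_on f {y \<in> V. E x y}"
    using bij_betw_imp_inj_on[OF bij] by (rule inj_on_subset) auto
  ultimately show ?thesis unfolding deg_def by (simp add: card_image)
qed

lemma abc_sum_graph_iso:
  assumes "simple_graph V' E'" and "graph_iso V E V' E'"
  shows "abc_sum V E = abc_sum V' E'"
proof -
  obtain f where bij: "bij_betw f V V'" and iso: "\<forall>u\<in>V. \<forall>v\<in>V. E u v \<longleftrightarrow> E' (f u) (f v)"
    using assms(2) unfolding graph_iso_def by blast
  have inV': "\<And>x y. E' x y \<Longrightarrow> x \<in> V' \<and> y \<in> V'"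
    using assms(1) unfolding simple_graph_def by auto
  have bij_arcs: "bij_betw (map_prod f f) (arcs V E) (arcs V' E')"
  proof (rule bij_betw_imageI)
    have inj: "inj_on f V" using bij by (rule bij_betw_imp_inj_on)
    show "inj_on (map_prod f f) (arcs V E)"
      by (rule inj_on_subset[OF map_prod_inj_on[OF inj inj]]) (auto simp: arcs_def)
    show "map_prod f f ` arcs V E = arcs V' E'"
      using bij iso inV' unfolding bij_betw_def arcs_def by (auto simp: image_iff)
  qed
  have "abc_sum V E = (\<Sum>p\<in>arcs V E.
      (\<lambda>(x, y). abc_weight (deg V' E' x) (deg V' E' y)) (map_prod f f p))"
    unfolding abc_sum_def using deg_graph_iso[OF bij iso] by (intro sum.cong refl) (auto simp: arcs_def)
  also have "\<dots> = abc_sum V' E'"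
    unfolding abc_sum_def by (rule sum.reindex_bij_betw[OF bij_arcs])
  finally show ?thesis .
qed

lemma colorable_iff_proper_coloring: "colorable V E k \<longleftrightarrow> (\<exists>c. proper_coloring V E k c)"
  unfolding colorable_def proper_coloring_def ..

lemma colorable_card:
  assumes "simple_graph V E"
  shows "colorable V E (card V)"
proof -
  have fin: "finite V" and irr: "\<And>v. \<not> E v v" using assms unfolding simple_graph_def by auto
  obtain h where h: "bij_betw h V {0..<card V}" using ex_bij_betw_finite_nat[OF fin] by blast
  then have "proper_coloring V E (card V) h"
    using irr unfolding proper_coloring_def bij_betw_def inj_on_def by auto
  then show ?thesis unfolding colorable_iff_proper_coloring by blast
qed

lemma colorable_chromatic_number:
  assumes "simple_graph V E"
  shows "colorable V E (chromatic_number V E)"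
  unfolding chromatic_number_def using colorable_card[OF assms] by (rule LeastI)

lemma ex_edge_if_chromatic_number_ge_2:
  assumes "2 \<le> chromatic_number V E"
  shows "\<exists>u\<in>V. \<exists>v\<in>V. E u v"
proof (rule ccontr)
  assume "\<not> (\<exists>u\<in>V. \<exists>v\<in>V. E u v)"
  then have "colorable V E 1" unfolding colorable_def by (intro exI[of _ "\<lambda>_. 0"]) auto
  then have "chromatic_number V E \<le> 1" unfolding chromatic_number_def by (rule Least_le)
  with assms show False by simp
qed

lemma deg_ge_1_if_connected:
  assumes sg: "simple_graph V E" and conn: "connected_graph V E"
    and edge: "\<exists>u\<in>V. \<exists>v\<in>V. E u v" and "x \<in> V"
  shows "1 \<le> deg V E x"
proof -
  obtain u v where uv: "u \<in> V" "v \<in> V" "E u v" using edge by blast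
  obtain y where "E x y"
  proof (cases "x = u")
    case False
    have "(\<lambda>x y. x \<in> V \<and> y \<in> V \<and> E x y)\<^sup>*\<^sup>* x u"
      using conn \<open>x \<in> V\<close> uv unfolding connected_graph_def by auto
    then show ?thesis using False by (cases rule: converse_rtranclpE) (auto intro: that)
  qed (use uv that in auto)
  then have "{w \<in> V. E x w} \<noteq> {}" using sg unfolding simple_graph_def by blast
  moreover have "finite V" using sg unfolding simple_graph_def by simp
  ultimately show ?thesis unfolding deg_def by (simp add: Suc_le_eq card_gt_0_iff)
qed

lemma turan_E_eq_multipartite: "turan_E n l = multipartite (turan_V n) (\<lambda>j. j mod l)"
  unfolding turan_E_def turan_V_def multipartite_def by (intro ext) auto

lemma card_color_class_turan:
  assumes "i < k"
  shows "card (color_class (turan_V (k * m)) (\<lambda>j. j mod k) i) = m"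
proof -
  have "color_class (turan_V (k * m)) (\<lambda>j. j mod k) i = (\<lambda>t. i + k * t) ` {0..<m}"
  proof (intro set_eqI iffI)
    fix j assume "j \<in> color_class (turan_V (k * m)) (\<lambda>j. j mod k) i"
    then have j: "j < k * m" "j mod k = i" unfolding color_class_def turan_V_def by auto
    then have "j = i + k * (j div k)" by (metis mod_mult_div_eq add.commute)
    moreover have "j div k < m" using j(1) by (metis less_mult_imp_div_less mult.commute)
    ultimately show "j \<in> (\<lambda>t. i + k * t) ` {0..<m}" by auto
  next
    fix j assume "j \<in> (\<lambda>t. i + k * t) ` {0..<m}"
    then obtain t where t: "t < m" "j = i + k * t" by auto
    have "i + k * t < k * (t + 1)" using assms by simp
    also have "\<dots> \<le> k * m" using t by (intro mult_le_mono2) simp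
    finally show "j \<in> color_class (turan_V (k * m)) (\<lambda>j. j mod k) i"
      using t assms unfolding color_class_def turan_V_def by simp
  qed
  moreover have "inj_on (\<lambda>t. i + k * t) {0..<m}" using assms by (intro inj_onI) simp
  ultimately show ?thesis by (simp add: card_image)
qed

lemma simple_graph_turan: "simple_graph (turan_V n) (turan_E n l)"
  unfolding turan_E_eq_multipartite turan_V_def by (rule simple_graph_multipartite) simp

lemma turan_V_mod_less: "\<forall>x\<in>turan_V (k * m). x mod k < k"
  by (cases "k = 0") (auto simp: turan_V_def)

lemma abc_sum_turan:
  assumes "2 \<le> k"
  shows "abc_sum (turan_V (k * m)) (turan_E (k * m) k)
    = sqrt (2 * (real (k * m))\<^sup>2 * (real (k * m) - real m - 1))"
proof -
  have fin: "finite (turan_V (k * m))" and card: "card (turan_V (k * m)) = k * m"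
    by (simp_all add: turan_V_def)
  have "\<forall>i<k. card (color_class (turan_V (k * m)) (\<lambda>j. j mod k) i) = m"
    using card_color_class_turan by blast
  from abc_sum_balanced_multipartite[OF fin turan_V_mod_less this card assms] show ?thesis
    unfolding turan_E_eq_multipartite card .
qed

lemma multipartite_iso_turan:
  assumes "finite V" and "\<forall>x\<in>V. c x < k" and "\<forall>i<k. card (color_class V c i) = m"
    and "card V = k * m"
  shows "graph_iso V (multipartite V c) (turan_V (card V)) (turan_E (card V) k)"
proof -
  have "finite (turan_V (k * m))" by (simp add: turan_V_def)
  moreover have "\<forall>i<k. card (color_class V c i) = card (color_class (turan_V (k * m)) (\<lambda>j. j mod k) i)"
    using assms(3) card_color_class_turan by simp
  ultimately show ?thesis
    unfolding turan_E_eq_multipartite assms(4)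
    using multipartite_iso[OF assms(1) _ assms(2) turan_V_mod_less] by blast
qed

theorem theorem5:
  fixes V :: "'a set" and E :: "'a \<Rightarrow> 'a \<Rightarrow> bool"
  assumes "simple_graph V E"
    and "connected_graph V E"
    and "chromatic_number V E \<ge> 2"
    and "chromatic_number V E dvd card V"
  shows "ABC V E \<le> ABC (turan_V (card V)) (turan_E (card V) (chromatic_number V E))
    \<and> (ABC V E = ABC (turan_V (card V)) (turan_E (card V) (chromatic_number V E))
         \<longleftrightarrow> graph_iso V E (turan_V (card V)) (turan_E (card V) (chromatic_number V E)))"
proof -
  define k where "k = chromatic_number V E"
  have k: "2 \<le> k" using assms(3) unfolding k_def .
  obtain m where n: "card V = k * m" using assms(4) unfolding k_def ..
  define B where "B = 2 * (real (card V))\<^sup>2 * (real (card V) - real m - 1)"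
  have fin: "finite V" using assms(1) unfolding simple_graph_def by simp
  have "V \<noteq> {}" using assms(2) unfolding connected_graph_def by simp
  obtain c where col: "proper_coloring V E k c"
    using colorable_chromatic_number[OF assms(1)] unfolding k_def colorable_iff_proper_coloring ..
  have deg: "\<forall>x\<in>V. 1 \<le> deg V E x"
    using deg_ge_1_if_connected[OF assms(1,2) ex_edge_if_chromatic_number_ge_2[OF assms(3)]] by blast
  note bound = abc_sum_le_balanced[OF assms(1) deg \<open>V \<noteq> {}\<close> col k n, folded B_def]
  have abc_T: "abc_sum (turan_V (card V)) (turan_E (card V) k) = sqrt B"
    unfolding B_def n by (rule abc_sum_turan[OF k])
  have "graph_iso V E (turan_V (card V)) (turan_E (card V) k) \<longleftrightarrow> abc_sum V E = sqrt B"
  proof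
    assume "graph_iso V E (turan_V (card V)) (turan_E (card V) k)"
    then show "abc_sum V E = sqrt B"
      unfolding abc_T[symmetric] by (rule abc_sum_graph_iso[OF simple_graph_turan])
  next
    assume "abc_sum V E = sqrt B"
    with bound(2) have "E = multipartite V c" and "\<forall>i<k. card (color_class V c i) = m" by auto
    then show "graph_iso V E (turan_V (card V)) (turan_E (card V) k)"
      using multipartite_iso_turan[OF fin _ _ n] col unfolding proper_coloring_def by simp
  qed
  then show ?thesis
    unfolding k_def[symmetric] ABC_eq_half_abc_sum[OF assms(1)]
      ABC_eq_half_abc_sum[OF simple_graph_turan] abc_T
    using bound(1) by simp
qed

end
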